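(* For every team $R$ of three robots, the Equivalent Oscillation problem $EqOsc$ is solvable by $R$ in the model $\mathcal{FSTA}$ under the fully synchronous scheduler with limited visibility, i.e. $EqOsc\in Task(\mathcal{FSTA}, FSYNCH, \mathcal{L.V.}; R)$.
   Context: Robots are anonymous, identical, autonomous points in the Euclidean plane. Each has its own local coordinate system, with no common chirality. Robots operate in Look-Compute-Move cycles: an instantaneous snapshot of visible robot positions, a computation of a destination, then a move. In $\mathcal{FSTA}$, each robot has a persistent light with colors from a finite set, set at the end of Compute and visible only to its owner; it serves as finite internal memory, and robots are silent. Under the fully synchronous scheduler, all robots are activated in every round. Under limited visibility, a robot sees only robots within a fixed distance $V_r$ (same for all robots) of its current position, and the initial visibility graph (robots adjacent iff they see each other) is connected. Problem Equivalent Oscillation ($EqOsc$): three robots $r_1,r_2,r_3$ are initially at collinear points $B,A,C$ respectively, with $AB=AC=d$. Let $B',C'$ be the points on this line (on segments $AB$, $AC$) with $AB'=AC'=\frac{2d}{3}$. The robots $r_1$ and $r_3$ must always be equidistant from $r_2$ (which is at $A$). They must also oscillate: if at some round $t$, $r_1,r_3$ are at $B,C$, then at some round $t'>t$ they are at $B',C'$; and if at round $t'$ they are at $B',C'$, then at some round $t''>t'$ they are at $B,C$. *)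

theory Defs
  imports Complex_Main
begin

text \<open>Each robot has a fixed local coordinate system,
given by a linear similarity (arbitrary unit length, rotation, and possibly a
reflection = no common chirality); its own current position is the origin of
its local view.\<close>

datatype rob = R1 | R2 | R3

text \<open>A frame (a, refl) with a \<noteq> 0: global displacement z is seen locally as
a * z (or a * conjugate z if refl).\<close>
type_synonym frame = "complex \<times> bool"

definition valid_frame :: "frame \<Rightarrow> bool" where
  "valid_frame F \<longleftrightarrow> fst F \<noteq> 0"

definition to_local :: "frame \<Rightarrow> complex \<Rightarrow> complex" where
  "to_local F z = fst F * (if snd F then cnj z else z)"

definition to_global :: "frame \<Rightarrow> complex \<Rightarrow> complex" where
  "to_global F w = (if snd F then cnj (w / fst F) else w / fst F)"

text \<open>An FSTA algorithm: from the robot's own light colour and the snapshot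
(local positions of the visible robots, itself included at the origin) it
computes a new colour and a destination in local coordinates.\<close>
type_synonym algo = "nat \<Rightarrow> complex set \<Rightarrow> nat \<times> complex"

definition snapshot :: "real \<Rightarrow> frame \<Rightarrow> (rob \<Rightarrow> complex) \<Rightarrow> rob \<Rightarrow> complex set" where
  "snapshot V F p i = {to_local F (p j - p i) | j. cmod (p j - p i) \<le> V}"

text \<open>Fully synchronous execution with rigid moves: all robots are activated
in every round.\<close>
fun exec :: "algo \<Rightarrow> (rob \<Rightarrow> frame) \<Rightarrow> real \<Rightarrow> (rob \<Rightarrow> complex) \<Rightarrow> nat \<Rightarrow> nat
             \<Rightarrow> (rob \<Rightarrow> complex) \<times> (rob \<Rightarrow> nat)" where
  "exec A F V p0 c0 0 = (p0, (\<lambda>_. c0))"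
| "exec A F V p0 c0 (Suc t) =
     (let (p, c) = exec A F V p0 c0 t in
       ((\<lambda>i. p i + to_global (F i) (snd (A (c i) (snapshot V (F i) p i)))),
        (\<lambda>i. fst (A (c i) (snapshot V (F i) p i)))))"

definition pos :: "algo \<Rightarrow> (rob \<Rightarrow> frame) \<Rightarrow> real \<Rightarrow> (rob \<Rightarrow> complex) \<Rightarrow> nat \<Rightarrow> nat \<Rightarrow> rob \<Rightarrow> complex" where
  "pos A F V p0 c0 t = fst (exec A F V p0 c0 t)"

definition vis_connected :: "real \<Rightarrow> (rob \<Rightarrow> complex) \<Rightarrow> bool" where
  "vis_connected V p \<longleftrightarrow> (\<forall>i j. (\<lambda>x y. cmod (p x - p y) \<le> V)\<^sup>*\<^sup>* i j)"

text \<open>EqOsc specification for a trajectory q, with A = centre and u = vector from A to C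
(so B = A - u, C = A + u, d = |u|, B' = A - 2u/3, C' = A + 2u/3).\<close>
definition eqosc_ok :: "(nat \<Rightarrow> rob \<Rightarrow> complex) \<Rightarrow> complex \<Rightarrow> complex \<Rightarrow> bool" where
  "eqosc_ok q a u \<longleftrightarrow>
     (\<forall>t. q t R2 = a) \<and>
     (\<forall>t. cmod (q t R1 - q t R2) = cmod (q t R3 - q t R2)) \<and>
     (\<forall>t. q t R1 = a - u \<and> q t R3 = a + u \<longrightarrow>
          (\<exists>t'>t. q t' R1 = a - (2/3) * u \<and> q t' R3 = a + (2/3) * u)) \<and>
     (\<forall>t. q t R1 = a - (2/3) * u \<and> q t R3 = a + (2/3) * u \<longrightarrow>
          (\<exists>t'>t. q t' R1 = a - u \<and> q t' R3 = a + u))"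

end

theory Submission
  imports Defs
begin

text \<open>The centre is the only robot whose view is centrally symmetric, so it never moves.
For an endpoint the nearest visible robot is the centre, so it knows the vector to the
centre in its own coordinates; as frames are similarities, moving by a third of that vector
takes it from distance \<open>d\<close> to \<open>2d/3\<close>, and moving by minus a half takes it back.
One bit of light says which of the two moves is due, and under the fully synchronous
scheduler both endpoints make the same move in every round. Connectivity of the initial
visibility graph forces \<open>d \<le> V\<close>, so the centre stays visible to the endpoints throughout.\<close>

definition symmetric_view :: "complex set \<Rightarrow> bool" where
  "symmetric_view S \<longleftrightarrow> (\<exists>x\<in>S. x \<noteq> 0 \<and> -x \<in> S)"

definition nearest_other :: "complex set \<Rightarrow> complex" where
  "nearest_other S = (SOME x. x \<in> S - {0} \<and> (\<forall>y\<in>S - {0}. cmod x \<le> cmod y))"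

definition eqosc_algo :: algo where
  "eqosc_algo c S =
     (if symmetric_view S then (c, 0)
      else if c = 0 then (1, (1/3) *\<^sub>R nearest_other S)
      else (0, (-1/2) *\<^sub>R nearest_other S))"

lemma endpoint_view:
  assumes "w \<noteq> 0" "w \<in> S" "S \<subseteq> {0, w, 2 * w}"
  shows "\<not> symmetric_view S" and "nearest_other S = w"
proof -
  have "-w \<notin> {0, w, 2 * w}" "-(2 * w) \<notin> {0, w, 2 * w}"
    using assms(1) by (auto simp: complex_eq_iff)
  moreover have "x \<in> {w, 2 * w}" if "x \<in> S" "x \<noteq> 0" for x
    using that assms(3) by auto
  ultimately show "\<not> symmetric_view S"
    using assms(3) unfolding symmetric_view_def by blast
  have "cmod w \<le> cmod y" if "y \<in> S - {0}" for y
    using that assms(3) by (auto simp: norm_mult)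
  moreover have "x = w" if "x \<in> S - {0}" "cmod x \<le> cmod w" for x
    using that assms(1,3) by (auto simp: norm_mult)
  ultimately show "nearest_other S = w"
    unfolding nearest_other_def using assms(1,2)
    by (intro some_equality) (auto intro: order_antisym)
qed

lemma to_local_uminus: "to_local F (- z) = - to_local F z"
  by (simp add: to_local_def)

lemma to_local_eq_0_iff: "valid_frame F \<Longrightarrow> to_local F z = 0 \<longleftrightarrow> z = 0"
  by (simp add: to_local_def valid_frame_def)

lemma to_global_scaleR_to_local:
  "valid_frame F \<Longrightarrow> to_global F (r *\<^sub>R to_local F z) = r *\<^sub>R z"
  by (simp add: to_local_def to_global_def valid_frame_def scaleR_conv_of_real)

lemma to_global_uminus: "to_global F (- w) = - to_global F w"
  by (simp add: to_global_def)

lemma to_global_0: "to_global F 0 = 0"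
  by (simp add: to_global_def)

lemma snapshot_subset:
  "snapshot V F p i \<subseteq> {to_local F (p R1 - p i), to_local F (p R2 - p i), to_local F (p R3 - p i)}"
  unfolding snapshot_def by (auto split: rob.split_asm) (metis rob.exhaust)

definition line_config :: "complex \<Rightarrow> complex \<Rightarrow> rob \<Rightarrow> complex" where
  "line_config a v i = (case i of R1 \<Rightarrow> a - v | R2 \<Rightarrow> a | R3 \<Rightarrow> a + v)"

lemma line_config_R2 [simp]: "line_config a v R2 = a"
  by (simp add: line_config_def)

lemma snapshot_line_config:
  assumes "v \<noteq> 0" "cmod v \<le> V" "valid_frame F"
  shows "symmetric_view (snapshot V F (line_config a v) R2)"
    and "snapshot V F (line_config a v) R1 \<subseteq> {0, to_local F v, 2 * to_local F v}"
    and "to_local F v \<in> snapshot V F (line_config a v) R1"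
    and "snapshot V F (line_config a v) R3 \<subseteq> {0, to_local F (-v), 2 * to_local F (-v)}"
    and "to_local F (-v) \<in> snapshot V F (line_config a v) R3"
proof -
  have seen: "to_local F (line_config a v j - line_config a v i)
                \<in> snapshot V F (line_config a v) i"
    if "cmod (line_config a v j - line_config a v i) \<le> V" for i j
    using that unfolding snapshot_def by blast
  show "to_local F v \<in> snapshot V F (line_config a v) R1"
    and "to_local F (-v) \<in> snapshot V F (line_config a v) R3"
    using seen[where i = R1 and j = R2] seen[where i = R3 and j = R2] assms(2)
    by (simp_all add: line_config_def)
  have "to_local F v \<in> snapshot V F (line_config a v) R2"
    and "- to_local F v \<in> snapshot V F (line_config a v) R2"
    using seen[where i = R2 and j = R3] seen[where i = R2 and j = R1] assms(2)
    by (simp_all add: line_config_def to_local_uminus)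
  then show "symmetric_view (snapshot V F (line_config a v) R2)"
    using assms(1,3) to_local_eq_0_iff unfolding symmetric_view_def by blast
  show "snapshot V F (line_config a v) R1 \<subseteq> {0, to_local F v, 2 * to_local F v}"
    and "snapshot V F (line_config a v) R3 \<subseteq> {0, to_local F (-v), 2 * to_local F (-v)}"
    using snapshot_subset[of V F "line_config a v" R1] snapshot_subset[of V F "line_config a v" R3]
    by (auto simp: line_config_def to_local_def)
qed

lemma eqosc_algo_line_config:
  assumes "v \<noteq> 0" "cmod v \<le> V" "valid_frame G"
  shows "line_config a v i + to_global G (snd (eqosc_algo k (snapshot V G (line_config a v) i)))
           = line_config a ((if k = 0 then 2/3 else 3/2) *\<^sub>R v) i"
    and "fst (eqosc_algo k (snapshot V G (line_config a v) i))
           = (if i = R2 then k else if k = 0 then 1 else 0)"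
proof -
  note view = snapshot_line_config[OF assms, of a]
  have "to_local G v \<noteq> 0" "to_local G (-v) \<noteq> 0"
    using assms(1,3) by (simp_all add: to_local_eq_0_iff)
  note R1 = endpoint_view[OF this(1) view(3,2)] and R3 = endpoint_view[OF this(2) view(5,4)]
  show "line_config a v i + to_global G (snd (eqosc_algo k (snapshot V G (line_config a v) i)))
          = line_config a ((if k = 0 then 2/3 else 3/2) *\<^sub>R v) i"
    using R1 R3 view(1) assms(3)
    by (cases i) (simp_all add: eqosc_algo_def line_config_def to_global_scaleR_to_local to_global_0
                    to_global_uminus to_local_uminus, simp_all add: scaleR_conv_of_real algebra_simps)
  show "fst (eqosc_algo k (snapshot V G (line_config a v) i))
          = (if i = R2 then k else if k = 0 then 1 else 0)"
    using R1 R3 view(1) by (cases i) (auto simp: eqosc_algo_def)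
qed

definition eqosc_trajectory :: "complex \<Rightarrow> complex \<Rightarrow> nat \<Rightarrow> rob \<Rightarrow> complex" where
  "eqosc_trajectory a u t = line_config a (if even t then u else (2/3) *\<^sub>R u)"

lemma exec_eqosc_algo:
  assumes "u \<noteq> 0" "cmod u \<le> V" "\<forall>i. valid_frame (F i)"
  shows "exec eqosc_algo F V (line_config a u) 0 t
           = (eqosc_trajectory a u t, \<lambda>i. if even t \<or> i = R2 then 0 else 1)"
proof (induction t)
  case 0
  show ?case by (simp add: eqosc_trajectory_def)
next
  case (Suc t)
  define v where "v = (if even t then u else (2/3) *\<^sub>R u)"
  have "v \<noteq> 0" "cmod v \<le> V"
    using assms(1,2) norm_ge_zero[of u] unfolding v_def by (auto simp del: norm_ge_zero)
  note step = eqosc_algo_line_config[OF this assms(3)[rule_format]]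
  define c :: "rob \<Rightarrow> nat" where "c i = (if even t \<or> i = R2 then 0 else 1)" for i
  have "exec eqosc_algo F V (line_config a u) 0 (Suc t)
          = (\<lambda>i. line_config a ((if c i = 0 then 2/3 else 3/2) *\<^sub>R v) i,
             \<lambda>i. if i = R2 then c i else if c i = 0 then 1 else 0)"
    using Suc.IH by (simp add: step c_def[symmetric] eqosc_trajectory_def v_def[symmetric])
  also have "\<dots> = (eqosc_trajectory a u (Suc t), \<lambda>i. if even (Suc t) \<or> i = R2 then 0 else 1)"
    by (auto simp: c_def v_def eqosc_trajectory_def line_config_def fun_eq_iff split: rob.split)
  finally show ?case .
qed

lemma vis_connected_line_config_imp_norm_le:
  assumes "vis_connected V (line_config a u)"
  shows "cmod u \<le> V"
proof (rule ccontr)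
  assume far: "\<not> cmod u \<le> V"
  let ?sees = "\<lambda>x y. cmod (line_config a u x - line_config a u y) \<le> V"
  have stuck: "?sees R1 y \<Longrightarrow> y = R1" for y
    using far norm_ge_zero[of u]
    by (cases y) (auto simp: line_config_def norm_mult norm_minus_commute simp del: norm_ge_zero)
  have "?sees\<^sup>*\<^sup>* x y \<Longrightarrow> x = R1 \<Longrightarrow> y = R1" for x y
    by (induction rule: rtranclp_induct) (auto dest: stuck)
  then show False
    using assms unfolding vis_connected_def by blast
qed

lemma eqosc_ok_eqosc_trajectory:
  assumes "u \<noteq> 0"
  shows "eqosc_ok (eqosc_trajectory a u) a u"
proof -
  let ?q = "eqosc_trajectory a u"
  have "a - u \<noteq> a - (2/3) * u"
    using assms by (auto simp: complex_eq_iff)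
  then have outer: "?q t R1 = a - u \<and> ?q t R3 = a + u \<longleftrightarrow> even t"
    and inner: "?q t R1 = a - (2/3) * u \<and> ?q t R3 = a + (2/3) * u \<longleftrightarrow> odd t" for t
    by (auto simp: eqosc_trajectory_def line_config_def scaleR_conv_of_real)
  have "cmod (?q t R1 - ?q t R2) = cmod (?q t R3 - ?q t R2)" for t
    by (simp add: eqosc_trajectory_def line_config_def)
  moreover have "\<exists>t'>t. odd t'" "\<exists>t'>t. even t'" for t :: nat
    by (rule exI[of _ "2 * t + 1"], simp) (rule exI[of _ "2 * t + 2"], simp)
  ultimately show ?thesis
    unfolding eqosc_ok_def outer inner by (auto simp: eqosc_trajectory_def)
qed

theorem lemma4:
  shows "\<exists>(Alg :: algo) (Col :: nat set) c0.
           finite Col \<and> c0 \<in> Col \<and> (\<forall>c\<in>Col. \<forall>S. fst (Alg c S) \<in> Col) \<and>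
           (\<forall>(V::real) (a::complex) (u::complex) (F :: rob \<Rightarrow> frame) (p0 :: rob \<Rightarrow> complex).
              V > 0 \<longrightarrow> u \<noteq> 0 \<longrightarrow> (\<forall>i. valid_frame (F i)) \<longrightarrow>
              p0 R1 = a - u \<longrightarrow> p0 R2 = a \<longrightarrow> p0 R3 = a + u \<longrightarrow>
              vis_connected V p0 \<longrightarrow>
              eqosc_ok (pos Alg F V p0 c0) a u)"
proof (intro exI conjI allI impI)
  show "finite {0::nat, 1}" and "(0::nat) \<in> {0, 1}"
    by simp_all
  show "\<forall>c\<in>{0, 1}. \<forall>S. fst (eqosc_algo c S) \<in> {0, 1}"
    by (simp add: eqosc_algo_def)
  fix V :: real and a u :: complex and F :: "rob \<Rightarrow> frame" and p0 :: "rob \<Rightarrow> complex"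
  assume "u \<noteq> 0" and frames: "\<forall>i. valid_frame (F i)"
    and "p0 R1 = a - u" "p0 R2 = a" "p0 R3 = a + u" and connected: "vis_connected V p0"
  then have p0: "p0 = line_config a u"
    by (auto simp: line_config_def split: rob.split)
  have "cmod u \<le> V"
    using connected by (simp add: p0 vis_connected_line_config_imp_norm_le)
  then have "pos eqosc_algo F V p0 0 = eqosc_trajectory a u"
    by (simp add: pos_def fun_eq_iff p0 exec_eqosc_algo[OF \<open>u \<noteq> 0\<close> _ frames])
  then show "eqosc_ok (pos eqosc_algo F V p0 0) a u"
    using \<open>u \<noteq> 0\<close> by (simp add: eqosc_ok_eqosc_trajectory)
qed

end
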